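(* Let $r,s,t$ be nonzero reals and let $\lambda=(\lambda_k)_{k\ge 0}$ be a strictly increasing sequence of positive reals with $\lambda_k\to\infty$. For $x\in\omega$ put $\widehat W_n(x)=\frac{1}{\lambda_n}\sum_{k=0}^n(\lambda_k-\lambda_{k-1})(rx_k+sx_{k-1}+tx_{k-2})$ and, for $\mu\in\{c_0,c,\ell_\infty,\ell_p\}$, $\mu^\lambda(\widehat B)=\{x\in\omega:(\widehat W_n(x))_n\in\mu\}$, normed by $\|x\|=\sup_n|\widehat W_n(x)|$ for $\mu\in\{c_0,c,\ell_\infty\}$ and by $\|x\|=(\sum_n|\widehat W_n(x)|^p)^{1/p}$ for $\mu=\ell_p$, $1\le p<\infty$. Then $c_0^\lambda(\widehat B)$, $c^\lambda(\widehat B)$, $\ell_\infty^\lambda(\widehat B)$ and $\ell_p^\lambda(\widehat B)$ are norm isomorphic to $c_0$, $c$, $\ell_\infty$ and $\ell_p$ respectively, i.e. in each case there is a linear bijection onto the classical space preserving norms.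
   Context: $\omega$ is the space of all complex sequences indexed by $\mathbb{N}=\{0,1,2,\dots\}$; $\ell_\infty,c,c_0,\ell_p$ are the spaces of bounded, convergent, null and absolutely $p$-summable sequences with their usual norms ($\sup$-norm on the first three). Convention: terms with negative subscript are $0$ ($x_{-1}=x_{-2}=0$, $\lambda_{-1}=0$). *)

theory Defs
  imports Complex_Main
begin

text \<open>Sequences in omega are functions nat => complex; negative subscripts are 0.\<close>

definition shift_seq :: "(nat \<Rightarrow> 'a::zero) \<Rightarrow> nat \<Rightarrow> int \<Rightarrow> 'a" where
  "shift_seq x k j = (if int k - j < 0 then 0 else x (nat (int k - j)))"

definition What :: "real \<Rightarrow> real \<Rightarrow> real \<Rightarrow> (nat \<Rightarrow> real) \<Rightarrow> (nat \<Rightarrow> complex) \<Rightarrow> nat \<Rightarrow> complex" where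
  "What r s t lam x n =
     complex_of_real (1 / lam n) *
     (\<Sum>k\<le>n. complex_of_real (lam k - shift_seq lam k 1) *
        (complex_of_real r * x k + complex_of_real s * shift_seq x k 1
           + complex_of_real t * shift_seq x k 2))"

definition c0_seq :: "(nat \<Rightarrow> complex) set" where
  "c0_seq = {x. x \<longlonglongrightarrow> 0}"

definition c_seq :: "(nat \<Rightarrow> complex) set" where
  "c_seq = {x. convergent x}"

definition linf_seq :: "(nat \<Rightarrow> complex) set" where
  "linf_seq = {x. Bseq x}"

definition lp_seq :: "real \<Rightarrow> (nat \<Rightarrow> complex) set" where
  "lp_seq p = {x. summable (\<lambda>n. norm (x n) powr p)}"

definition sup_norm :: "(nat \<Rightarrow> complex) \<Rightarrow> real" where
  "sup_norm x = (SUP n. norm (x n))"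

definition lp_norm :: "real \<Rightarrow> (nat \<Rightarrow> complex) \<Rightarrow> real" where
  "lp_norm p x = (\<Sum>n. norm (x n) powr p) powr (1 / p)"

definition lam_space :: "real \<Rightarrow> real \<Rightarrow> real \<Rightarrow> (nat \<Rightarrow> real) \<Rightarrow> (nat \<Rightarrow> complex) set
    \<Rightarrow> (nat \<Rightarrow> complex) set" where
  "lam_space r s t lam \<mu> = {x. What r s t lam x \<in> \<mu>}"

definition linear_on :: "((nat \<Rightarrow> complex) \<Rightarrow> (nat \<Rightarrow> complex)) \<Rightarrow> (nat \<Rightarrow> complex) set \<Rightarrow> bool" where
  "linear_on T X \<longleftrightarrow> (\<forall>x\<in>X. \<forall>y\<in>X. \<forall>a b :: complex.
      T (\<lambda>n. a * x n + b * y n) = (\<lambda>n. a * T x n + b * T y n))"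

definition norm_isomorphic ::
  "(nat \<Rightarrow> complex) set \<Rightarrow> ((nat \<Rightarrow> complex) \<Rightarrow> real) \<Rightarrow>
   (nat \<Rightarrow> complex) set \<Rightarrow> ((nat \<Rightarrow> complex) \<Rightarrow> real) \<Rightarrow> bool" where
  "norm_isomorphic X nX Y nY \<longleftrightarrow>
     (\<exists>T. linear_on T X \<and> bij_betw T X Y \<and> (\<forall>x\<in>X. nY (T x) = nX x))"

end

theory Submission
  imports Defs
begin

text \<open>The transform W factors as the band operator x \<mapsto> r x(k) + s x(k-1) + t x(k-2)
  followed by the weighted mean z \<mapsto> (1/\<lambda>(n)) \<Sum>k\<le>n (\<lambda>(k) - \<lambda>(k-1)) z(k). Both are
  linear bijections of the whole sequence space: the band operator is lower triangular with
  diagonal r \<noteq> 0, and the mean is undone by a first difference of \<lambda>(n) W(n). Hence W is a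
  linear bijection of \<omega>, and it maps the space of all x with W(x) \<in> \<mu> onto \<mu>
  isometrically by the very definition of the norm, whatever the sequence space \<mu> and its
  norm are.\<close>

lemma shift_seq_0 [simp]: "shift_seq f 0 1 = 0" "shift_seq f 0 2 = 0" "shift_seq f (Suc 0) 2 = 0"
  by (auto simp: shift_seq_def)

lemma shift_seq_Suc [simp]: "shift_seq f (Suc m) 1 = f m" "shift_seq f (Suc (Suc m)) 2 = f m"
  by (auto simp: shift_seq_def nat_int_add)

lemma shift_seq_linear:
  "shift_seq (\<lambda>n. a * x n + b * y n) k j = a * shift_seq x k j + b * shift_seq y k j"
  for a b :: complex
  by (simp add: shift_seq_def)

lemma norm_isomorphic_preimage:
  fixes T S :: "(nat \<Rightarrow> complex) \<Rightarrow> nat \<Rightarrow> complex"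
  assumes linear: "\<And>x y a b. T (\<lambda>n. a * x n + b * y n) = (\<lambda>n. a * T x n + b * T y n)"
    and left_inverse: "\<And>x. S (T x) = x"
    and right_inverse: "\<And>y. T (S y) = y"
  shows "norm_isomorphic {x. T x \<in> \<mu>} (\<lambda>x. N (T x)) \<mu> N"
  unfolding norm_isomorphic_def
proof (intro exI[of _ T] conjI ballI)
  show "linear_on T {x. T x \<in> \<mu>}"
    by (simp add: linear_on_def linear)
  have "inj_on T {x. T x \<in> \<mu>}"
    by (metis inj_onI left_inverse)
  moreover have "T ` {x. T x \<in> \<mu>} = \<mu>"
    using right_inverse by (auto intro: image_eqI[of _ T "S _"])
  ultimately show "bij_betw T {x. T x \<in> \<mu>} \<mu>"
    by (simp add: bij_betw_def)
qed simp

definition band_op :: "complex \<Rightarrow> complex \<Rightarrow> complex \<Rightarrow> (nat \<Rightarrow> complex) \<Rightarrow> nat \<Rightarrow> complex" where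
  "band_op a b c x k = a * x k + b * shift_seq x k 1 + c * shift_seq x k 2"

fun band_inv :: "complex \<Rightarrow> complex \<Rightarrow> complex \<Rightarrow> (nat \<Rightarrow> complex) \<Rightarrow> nat \<Rightarrow> complex" where
  "band_inv a b c y 0 = y 0 / a"
| "band_inv a b c y (Suc 0) = (y 1 - b * band_inv a b c y 0) / a"
| "band_inv a b c y (Suc (Suc n)) =
     (y (Suc (Suc n)) - b * band_inv a b c y (Suc n) - c * band_inv a b c y n) / a"

lemma band_op_linear:
  "band_op a b c (\<lambda>n. u * x n + v * y n) = (\<lambda>n. u * band_op a b c x n + v * band_op a b c y n)"
  by (simp add: fun_eq_iff band_op_def shift_seq_linear algebra_simps)

lemma band_op_band_inv:
  assumes "a \<noteq> 0"
  shows "band_op a b c (band_inv a b c y) = y"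
proof
  fix n show "band_op a b c (band_inv a b c y) n = y n"
    using assms by (cases "(a, b, c, y, n)" rule: band_inv.cases) (auto simp: band_op_def field_simps)
qed

lemma band_inv_band_op:
  assumes "a \<noteq> 0"
  shows "band_inv a b c (band_op a b c x) = x"
proof
  fix n show "band_inv a b c (band_op a b c x) n = x n"
  proof (induction n rule: less_induct)
    case (less n)
    then show ?case
      using assms by (cases "(a, b, c, band_op a b c x, n)" rule: band_inv.cases)
        (auto simp: band_op_def field_simps)
  qed
qed

definition weighted_mean :: "(nat \<Rightarrow> real) \<Rightarrow> (nat \<Rightarrow> complex) \<Rightarrow> nat \<Rightarrow> complex" where
  "weighted_mean lam z n =
     complex_of_real (1 / lam n) * (\<Sum>k\<le>n. complex_of_real (lam k - shift_seq lam k 1) * z k)"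

definition weighted_mean_inv :: "(nat \<Rightarrow> real) \<Rightarrow> (nat \<Rightarrow> complex) \<Rightarrow> nat \<Rightarrow> complex" where
  "weighted_mean_inv lam y n =
     (complex_of_real (lam n) * y n - shift_seq (\<lambda>k. complex_of_real (lam k) * y k) n 1)
       / complex_of_real (lam n - shift_seq lam n 1)"

lemma weighted_mean_linear:
  "weighted_mean lam (\<lambda>n. a * x n + b * y n)
     = (\<lambda>n. a * weighted_mean lam x n + b * weighted_mean lam y n)"
  by (simp add: fun_eq_iff weighted_mean_def distrib_left sum.distrib
      mult.left_commute[of _ a] mult.left_commute[of _ b] flip: sum_distrib_left)

lemma scaled_weighted_mean:
  assumes "lam n \<noteq> 0"
  shows "complex_of_real (lam n) * weighted_mean lam z n
           = (\<Sum>k\<le>n. complex_of_real (lam k - shift_seq lam k 1) * z k)"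
  using assms by (simp add: weighted_mean_def)

lemma weighted_mean_weighted_mean_inv:
  assumes "\<And>k. lam k \<noteq> shift_seq lam k 1" and "\<And>n. lam n \<noteq> 0"
  shows "weighted_mean lam (weighted_mean_inv lam y) = y"
proof
  fix n
  let ?p = "\<lambda>k. complex_of_real (lam k) * y k"
  have "(\<Sum>k\<le>n. complex_of_real (lam k - shift_seq lam k 1) * weighted_mean_inv lam y k)
          = (\<Sum>k\<le>n. ?p k - shift_seq ?p k 1)"
    using assms(1) by (intro sum.cong) (auto simp: weighted_mean_inv_def)
  also have "\<dots> = ?p n"
    by (induction n) auto
  finally show "weighted_mean lam (weighted_mean_inv lam y) n = y n"
    using assms(2)[of n] by (simp add: weighted_mean_def)
qed

lemma weighted_mean_inv_weighted_mean:
  assumes "\<And>k. lam k \<noteq> shift_seq lam k 1" and "\<And>n. lam n \<noteq> 0"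
  shows "weighted_mean_inv lam (weighted_mean lam z) = z"
proof
  fix n
  show "weighted_mean_inv lam (weighted_mean lam z) n = z n"
  proof (cases n)
    case 0
    then show ?thesis
      using assms(1)[of 0] scaled_weighted_mean[of lam 0 z] assms(2)[of 0]
      by (simp add: weighted_mean_inv_def)
  next
    case (Suc m)
    then show ?thesis
      using assms(1)[of n] scaled_weighted_mean[of lam n z] scaled_weighted_mean[of lam m z]
        assms(2)[of n] assms(2)[of m]
      by (simp add: weighted_mean_inv_def field_simps)
  qed
qed

lemma strict_mono_neq_shift_seq:
  fixes lam :: "nat \<Rightarrow> real"
  assumes "strict_mono lam" and "\<And>k. lam k > 0"
  shows "lam k \<noteq> shift_seq lam k 1"
  using assms strict_monoD[OF assms(1), of "k - 1" k]
  by (cases k) (auto simp: less_imp_neq[symmetric])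

lemma What_eq_weighted_mean_band_op:
  "What r s t lam = (\<lambda>x. weighted_mean lam (band_op r s t x))"
  by (simp add: fun_eq_iff What_def weighted_mean_def band_op_def)

theorem theorem2:
  fixes r s t :: real and lam :: "nat \<Rightarrow> real"
  assumes "r \<noteq> 0" "s \<noteq> 0" "t \<noteq> 0"
    and "strict_mono lam" and "\<And>k. lam k > 0"
    and "filterlim lam at_top sequentially"
  shows "norm_isomorphic (lam_space r s t lam c0_seq) (\<lambda>x. sup_norm (What r s t lam x))
           c0_seq sup_norm \<and>
         norm_isomorphic (lam_space r s t lam c_seq) (\<lambda>x. sup_norm (What r s t lam x))
           c_seq sup_norm \<and>
         norm_isomorphic (lam_space r s t lam linf_seq) (\<lambda>x. sup_norm (What r s t lam x))
           linf_seq sup_norm \<and>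
         (\<forall>p::real. 1 \<le> p \<longrightarrow> norm_isomorphic (lam_space r s t lam (lp_seq p))
           (\<lambda>x. lp_norm p (What r s t lam x)) (lp_seq p) (lp_norm p))"
proof -
  \<comment> \<open>Only r \<noteq> 0, \<lambda>(n) \<noteq> 0 and \<lambda>(k) \<noteq> \<lambda>(k-1) are needed; s, t \<noteq> 0 and \<lambda> \<rightarrow> \<infinity> are not.\<close>
  let ?W = "What r s t lam"
  let ?W_inv = "\<lambda>y. band_inv r s t (weighted_mean_inv lam y)"
  have lam_diff: "\<And>k. lam k \<noteq> shift_seq lam k 1" and lam_nz: "\<And>n. lam n \<noteq> 0"
    using strict_mono_neq_shift_seq[OF assms(4,5)] assms(5) by (auto simp: less_imp_neq[symmetric])
  have r_nz: "complex_of_real r \<noteq> 0"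
    using assms(1) by simp
  have "\<And>x y a b. ?W (\<lambda>n. a * x n + b * y n) = (\<lambda>n. a * ?W x n + b * ?W y n)"
    by (simp add: What_eq_weighted_mean_band_op band_op_linear weighted_mean_linear)
  moreover have "\<And>x. ?W_inv (?W x) = x"
    by (simp add: What_eq_weighted_mean_band_op weighted_mean_inv_weighted_mean[OF lam_diff lam_nz]
        band_inv_band_op[OF r_nz])
  moreover have "\<And>y. ?W (?W_inv y) = y"
    by (simp add: What_eq_weighted_mean_band_op band_op_band_inv[OF r_nz]
        weighted_mean_weighted_mean_inv[OF lam_diff lam_nz])
  ultimately have "\<And>\<mu> N. norm_isomorphic (lam_space r s t lam \<mu>) (\<lambda>x. N (?W x)) \<mu> N"
    unfolding lam_space_def by (rule norm_isomorphic_preimage)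
  then show ?thesis
    by blast
qed

end
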